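(* Let $G$ be a graph of order $n\ge 2$. Then $\gamma^{SLD}(G)=n$ if and only if every maximal vertex of the vicinal preorder of $G$ has a twin.
   Context: All graphs are finite, simple and undirected (not necessarily connected). For $u\in V$, $N(u)$ is the set of neighbours of $u$ and $N[u]=N(u)\cup\{u\}$. A code is a non-empty subset $C\subseteq V$; $I(C;u)=N[u]\cap C$. A code $C$ is self-locating-dominating if for every $u\in V\setminus C$ we have $I(C;u)\neq\emptyset$ and $\bigcap_{c\in I(C;u)}N[c]=\{u\}$; $\gamma^{SLD}(G)$ is the minimum size of such a code. The vicinal preorder $\lesssim$ on $V(G)$ is defined by $x\lesssim y$ iff $N(x)\subseteq N[y]$. Write $x<y$ if $x\lesssim y$ and not $y\lesssim x$. A vertex $x$ is maximal if there is no vertex $y$ with $x<y$. Distinct vertices $u,v$ are twins if $N(u)=N(v)$ (false twins) or $N[u]=N[v]$ (true twins). *)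

theory Defs
  imports Main
begin

definition graph :: "'a set \<Rightarrow> ('a \<Rightarrow> 'a \<Rightarrow> bool) \<Rightarrow> bool" where
  "graph V E \<longleftrightarrow> finite V \<and> (\<forall>u v. E u v \<longrightarrow> E v u) \<and> (\<forall>u. \<not> E u u)
     \<and> (\<forall>u v. E u v \<longrightarrow> u \<in> V \<and> v \<in> V)"

definition nbhd :: "'a set \<Rightarrow> ('a \<Rightarrow> 'a \<Rightarrow> bool) \<Rightarrow> 'a \<Rightarrow> 'a set" where
  "nbhd V E u = {v \<in> V. E u v}"

definition cnbhd :: "'a set \<Rightarrow> ('a \<Rightarrow> 'a \<Rightarrow> bool) \<Rightarrow> 'a \<Rightarrow> 'a set" where
  "cnbhd V E u = insert u (nbhd V E u)"

definition is_SLD :: "'a set \<Rightarrow> ('a \<Rightarrow> 'a \<Rightarrow> bool) \<Rightarrow> 'a set \<Rightarrow> bool" where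
  "is_SLD V E C \<longleftrightarrow> C \<noteq> {} \<and> C \<subseteq> V \<and>
     (\<forall>u \<in> V - C. cnbhd V E u \<inter> C \<noteq> {} \<and>
        (\<Inter>c \<in> cnbhd V E u \<inter> C. cnbhd V E c) = {u})"

definition gamma_SLD :: "'a set \<Rightarrow> ('a \<Rightarrow> 'a \<Rightarrow> bool) \<Rightarrow> nat" where
  "gamma_SLD V E = Min (card ` {C. is_SLD V E C})"

definition vic_le :: "'a set \<Rightarrow> ('a \<Rightarrow> 'a \<Rightarrow> bool) \<Rightarrow> 'a \<Rightarrow> 'a \<Rightarrow> bool" where
  "vic_le V E x y \<longleftrightarrow> nbhd V E x \<subseteq> cnbhd V E y"

definition vic_less :: "'a set \<Rightarrow> ('a \<Rightarrow> 'a \<Rightarrow> bool) \<Rightarrow> 'a \<Rightarrow> 'a \<Rightarrow> bool" where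
  "vic_less V E x y \<longleftrightarrow> vic_le V E x y \<and> \<not> vic_le V E y x"

definition vic_maximal :: "'a set \<Rightarrow> ('a \<Rightarrow> 'a \<Rightarrow> bool) \<Rightarrow> 'a \<Rightarrow> bool" where
  "vic_maximal V E x \<longleftrightarrow> x \<in> V \<and> \<not> (\<exists>y \<in> V. vic_less V E x y)"

definition twins :: "'a set \<Rightarrow> ('a \<Rightarrow> 'a \<Rightarrow> bool) \<Rightarrow> 'a \<Rightarrow> 'a \<Rightarrow> bool" where
  "twins V E u v \<longleftrightarrow> u \<noteq> v \<and> (nbhd V E u = nbhd V E v \<or> cnbhd V E u = cnbhd V E v)"

end

theory Submission
  imports Defs
begin

text \<open>Supersets of SLD-codes are SLD-codes, so \<open>\<gamma>\<^sup>S\<^sup>L\<^sup>D(G) = n\<close> exactly when no code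
  \<open>V - {x}\<close> is self-locating-dominating. For such a code only \<open>x\<close> itself has to be located:
  \<open>I(C;x) = N(x)\<close>, and the intersection of the \<open>N[c]\<close> over \<open>c \<in> N(x)\<close> is the set of all \<open>y\<close>
  with \<open>x \<lesssim> y\<close>. Hence \<open>\<gamma>\<^sup>S\<^sup>L\<^sup>D(G) = n\<close> iff every vertex lies below some other vertex
  (an isolated vertex lies below every vertex). A non-maximal vertex always does, and a maximal
  one does iff it has a twin, because twins are exactly distinct vertices with \<open>x \<lesssim> y \<lesssim> x\<close>.\<close>

lemma graph_cnbhd_sym: "graph V E \<Longrightarrow> c \<in> cnbhd V E u \<Longrightarrow> u \<in> cnbhd V E c"
  unfolding graph_def cnbhd_def nbhd_def by auto

lemma vic_le_refl: "vic_le V E x x"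
  unfolding vic_le_def cnbhd_def by auto

lemma twins_iff_vic_le_both:
  assumes "graph V E" and "x \<in> V" and "y \<in> V"
  shows "twins V E x y \<longleftrightarrow> x \<noteq> y \<and> vic_le V E x y \<and> vic_le V E y x"
proof -
  have sym: "\<And>u v. E u v \<Longrightarrow> E v u" and irr: "\<And>u. \<not> E u u"
    using assms(1) unfolding graph_def by auto
  have "nbhd V E x = nbhd V E y \<or> cnbhd V E x = cnbhd V E y"
    if "vic_le V E x y" "vic_le V E y x" "x \<noteq> y"
  proof (cases "E x y")
    case True
    then have "cnbhd V E x = cnbhd V E y"
      using that assms(2,3) unfolding vic_le_def cnbhd_def nbhd_def by (blast dest: sym)
    then show ?thesis ..
  next
    case False
    then have "nbhd V E x = nbhd V E y"
      using that irr unfolding vic_le_def cnbhd_def nbhd_def by (blast dest: sym)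
    then show ?thesis ..
  qed
  then show ?thesis
    unfolding twins_def vic_le_def cnbhd_def by blast
qed

lemma is_SLD_superset:
  assumes g: "graph V E" and C: "is_SLD V E C" and "C \<subseteq> D" and "D \<subseteq> V"
  shows "is_SLD V E D"
  unfolding is_SLD_def
proof (intro conjI ballI)
  show "D \<noteq> {}" and "D \<subseteq> V"
    using C assms(3,4) unfolding is_SLD_def by auto
  fix u assume u: "u \<in> V - D"
  then have "u \<in> V - C"
    using assms(3) by blast
  then have dom: "cnbhd V E u \<inter> C \<noteq> {}" and loc: "(\<Inter>c \<in> cnbhd V E u \<inter> C. cnbhd V E c) = {u}"
    using C unfolding is_SLD_def by blast+
  from dom show "cnbhd V E u \<inter> D \<noteq> {}"
    using assms(3) by blast
  have "u \<in> (\<Inter>c \<in> cnbhd V E u \<inter> D. cnbhd V E c)"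
    using graph_cnbhd_sym[OF g] by auto
  then show "(\<Inter>c \<in> cnbhd V E u \<inter> D. cnbhd V E c) = {u}"
    using loc assms(3) by blast
qed

lemma gamma_SLD_eq_card_iff:
  assumes g: "graph V E" and "V \<noteq> {}"
  shows "gamma_SLD V E = card V \<longleftrightarrow> (\<forall>x\<in>V. \<not> is_SLD V E (V - {x}))"
proof -
  have fin: "finite V"
    using g unfolding graph_def by auto
  let ?S = "card ` {C. is_SLD V E C}"
  have "{C. is_SLD V E C} \<subseteq> Pow V"
    unfolding is_SLD_def by auto
  then have finS: "finite ?S"
    using fin by (meson finite_Pow_iff finite_imageI finite_subset)
  have V_in_S: "card V \<in> ?S"
    using assms unfolding is_SLD_def by auto
  show ?thesis
  proof
    assume "gamma_SLD V E = card V"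
    moreover have "Min ?S \<le> card C" if "is_SLD V E C" for C
      using finS that by (intro Min_le) auto
    ultimately have "card V \<le> card C" if "is_SLD V E C" for C
      using that unfolding gamma_SLD_def by simp
    then show "\<forall>x\<in>V. \<not> is_SLD V E (V - {x})"
      using card_Diff1_less[OF fin] by (meson not_le)
  next
    assume none: "\<forall>x\<in>V. \<not> is_SLD V E (V - {x})"
    have "C = V" if C: "is_SLD V E C" for C
    proof (rule ccontr)
      assume "C \<noteq> V"
      moreover have "C \<subseteq> V"
        using C unfolding is_SLD_def by auto
      ultimately obtain x where "x \<in> V" "x \<notin> C"
        by auto
      then have "is_SLD V E (V - {x})"
        by (intro is_SLD_superset[OF g C]) (use \<open>C \<subseteq> V\<close> in auto)
      with none \<open>x \<in> V\<close> show False
        by blast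
    qed
    then have "?S = {card V}"
      using V_in_S by auto
    then show "gamma_SLD V E = card V"
      unfolding gamma_SLD_def by simp
  qed
qed

lemma is_SLD_Diff_singleton_iff:
  assumes g: "graph V E" and x: "x \<in> V" and ne: "V - {x} \<noteq> {}"
  shows "is_SLD V E (V - {x}) \<longleftrightarrow>
     nbhd V E x \<noteq> {} \<and> (\<forall>y\<in>V. y \<noteq> x \<longrightarrow> \<not> vic_le V E x y)"
proof -
  let ?L = "\<Inter>c \<in> nbhd V E x. cnbhd V E c"
  have code: "cnbhd V E x \<inter> (V - {x}) = nbhd V E x" and rest: "V - (V - {x}) = {x}"
    using g x unfolding graph_def cnbhd_def nbhd_def by auto
  have L: "y \<in> ?L \<longleftrightarrow> vic_le V E x y" if "y \<in> V" for y
    using g that unfolding vic_le_def cnbhd_def nbhd_def graph_def by auto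
  have L_sub: "?L \<subseteq> V" if "nbhd V E x \<noteq> {}"
    using that g unfolding nbhd_def cnbhd_def graph_def by blast
  have "is_SLD V E (V - {x}) \<longleftrightarrow> nbhd V E x \<noteq> {} \<and> ?L = {x}"
    unfolding is_SLD_def rest using ne code by simp
  also have "\<dots> \<longleftrightarrow> nbhd V E x \<noteq> {} \<and> (\<forall>y\<in>V. y \<noteq> x \<longrightarrow> \<not> vic_le V E x y)"
  proof (intro conj_cong refl)
    assume ne_x: "nbhd V E x \<noteq> {}"
    have "x \<in> ?L"
      using L[OF x] vic_le_refl by simp
    with L L_sub[OF ne_x]
    show "?L = {x} \<longleftrightarrow> (\<forall>y\<in>V. y \<noteq> x \<longrightarrow> \<not> vic_le V E x y)"
      by blast
  qed
  finally show ?thesis .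
qed

lemma card_ge_2_Diff_singleton_ne:
  assumes "card V \<ge> 2"
  shows "V - {x} \<noteq> {}"
proof
  assume "V - {x} = {}"
  then have "V = {} \<or> V = {x}"
    by (intro subset_singletonD) blast
  with assms show False
    by auto
qed

lemma gamma_SLD_eq_card_iff_vic_le_other:
  assumes g: "graph V E" and n: "card V \<ge> 2"
  shows "gamma_SLD V E = card V \<longleftrightarrow> (\<forall>x\<in>V. \<exists>y\<in>V. y \<noteq> x \<and> vic_le V E x y)"
proof -
  have other: "V - {x} \<noteq> {}" for x
    using card_ge_2_Diff_singleton_ne[OF n] .
  have no_deletion: "\<not> is_SLD V E (V - {x}) \<longleftrightarrow> (\<exists>y\<in>V. y \<noteq> x \<and> vic_le V E x y)"
    if x: "x \<in> V" for x
  proof (cases "nbhd V E x = {}")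
    case True
    then have "\<not> is_SLD V E (V - {x})"
      using is_SLD_Diff_singleton_iff[OF g x other] by simp
    moreover obtain y where "y \<in> V" "y \<noteq> x"
      using other[of x] by blast
    moreover have "vic_le V E x y"
      using True unfolding vic_le_def by simp
    ultimately show ?thesis
      by blast
  next
    case False
    then show ?thesis
      using is_SLD_Diff_singleton_iff[OF g x other] by simp
  qed
  have "V \<noteq> {}"
    using other by blast
  then show ?thesis
    by (simp add: gamma_SLD_eq_card_iff[OF g] no_deletion)
qed

lemma maximal_has_twin_iff:
  assumes g: "graph V E" and m: "vic_maximal V E x"
  shows "(\<exists>y\<in>V. twins V E x y) \<longleftrightarrow> (\<exists>y\<in>V. y \<noteq> x \<and> vic_le V E x y)"
  using m twins_iff_vic_le_both[OF g]
  unfolding vic_maximal_def vic_less_def by blast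

lemma not_maximal_vic_le_other:
  assumes "x \<in> V" and "\<not> vic_maximal V E x"
  shows "\<exists>y\<in>V. y \<noteq> x \<and> vic_le V E x y"
  using assms unfolding vic_maximal_def vic_less_def by (metis vic_le_refl)

theorem mainTheorem5:
  fixes V :: "'a set" and E :: "'a \<Rightarrow> 'a \<Rightarrow> bool"
  assumes "graph V E" and "card V \<ge> 2"
  shows "gamma_SLD V E = card V \<longleftrightarrow>
         (\<forall>x. vic_maximal V E x \<longrightarrow> (\<exists>y \<in> V. twins V E x y))"
proof -
  have "(\<exists>y\<in>V. y \<noteq> x \<and> vic_le V E x y) \<longleftrightarrow>
        (vic_maximal V E x \<longrightarrow> (\<exists>y \<in> V. twins V E x y))" if "x \<in> V" for x
    using maximal_has_twin_iff[OF assms(1)] not_maximal_vic_le_other[OF that] by blast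
  moreover have "vic_maximal V E x \<Longrightarrow> x \<in> V" for x
    by (simp add: vic_maximal_def)
  ultimately show ?thesis
    unfolding gamma_SLD_eq_card_iff_vic_le_other[OF assms] by blast
qed

end
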